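(* Let $\alpha\ge 1$ be a constant and let $n,m$ be integers with $\frac{2}{3}n\le m\le n-1$. For every instance (Bernoulli mean vector $\nu=(\mu_1,\dots,\mu_n)$ with unique best arm) and every order of the arms in the stream, the single-pass algorithm $\mathcal{A}_{\mathrm{large}}$ described below uses memory of $m$ arms and, for all sufficiently large $T$, has expected regret $$\mathbb{E}[R(T)] = O\!\left(\left(\frac{2\alpha}{e}\right)^{\frac{\alpha}{\alpha+1}}\frac{(n-m)\,T^{\frac{1}{\alpha+1}}}{n^{1+\frac{1}{\alpha+1}}}\sum_{i:\Delta_i>0}\Delta_i^{1-2\alpha}\right),$$ where the implied constant is absolute.
   Context: Streaming stochastic multi-armed bandit: $n$ arms arrive one by one in a stream (in an arbitrary fixed order); arm $i$ has Bernoulli rewards with mean $\mu_i\in[0,1]$. At most $m<n$ arms (and their statistics) can be stored in memory. In each of the $T$ rounds, the player may discard any stored arms and read any number of next arms from the stream into memory (subject to the memory limit), and then pulls exactly one arm $A_t$ currently in memory, observing its reward. An arm that has been discarded, or was passed over in the stream, can never be pulled again. Let $\mu_*=\max_i\mu_i$ (attained by a unique arm $\mathrm{arm}_*$), $\Delta_i=\mu_*-\mu_i$, and the expected regret $\mathbb{E}[R(T)]=\mathbb{E}\big[\sum_{t=1}^T(\mu_*-\mu_{A_t})\big]$. UCB denotes the standard Upper Confidence Bound algorithm (in round $t$ pull an arm maximizing $\hat\mu_i(t-1)+\sqrt{2\log(1/\delta)/T_i(t-1)}$, with unpulled arms having index $+\infty$), used as a black box with the property that when run on a fixed set of Bernoulli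 arms for $T$ rounds, every arm $i$ of the set with gap $\Delta_i>0$ relative to the best arm of the set is pulled at most $8\log T/\Delta_i^2$ times in expectation. Algorithm $\mathcal{A}_{\mathrm{large}}$ (input $T,m,n,\alpha$): set $L=\left(\frac{2\alpha}{e}\right)^{\frac{\alpha}{\alpha+1}}\left(\frac{T}{n}\right)^{\frac{1}{\alpha+1}}$ and $c=n-m$. Read the first $m$ arms of the stream. Choose $2c$ of these arms uniformly at random, $s_1,\dots,s_{2c}$ (in uniformly random order). For $i=1,\dots,c$: pull $s_{2i-1}$ and $s_{2i}$ each $L$ times, compute their empirical means, and discard the one with the smaller empirical mean. Then read the remaining $c$ arms of the stream, and run UCB on the $m$ arms in memory for all remaining rounds. *)

theory Defs
  imports "HOL-Probability.Probability"
begin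

text \<open>Arms are indexed 0,...,n-1 in stream order; mu i is the Bernoulli mean of arm i.\<close>

definition gap :: "(nat \<Rightarrow> real) \<Rightarrow> nat \<Rightarrow> nat \<Rightarrow> real" where
  "gap mu n i = Max (mu ` {..<n}) - mu i"

definition Lparam :: "real \<Rightarrow> nat \<Rightarrow> nat \<Rightarrow> real" where
  "Lparam \<alpha> T n = (2 * \<alpha> / exp 1) powr (\<alpha> / (\<alpha> + 1)) * (real T / real n) powr (1 / (\<alpha> + 1))"

definition Lpulls :: "real \<Rightarrow> nat \<Rightarrow> nat \<Rightarrow> nat" where
  "Lpulls \<alpha> T n = nat \<lceil>Lparam \<alpha> T n\<rceil>"

definition selections :: "nat \<Rightarrow> nat \<Rightarrow> nat list set" where
  "selections m c = {xs. distinct xs \<and> set xs \<subseteq> {..<m} \<and> length xs = 2 * c}"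

text \<open>Duels on consecutive pairs (s_1,s_2),(s_3,s_4),...: each arm pulled L times, so its
  reward sum is Binomial(L, mu); the arm with smaller empirical mean is discarded.
  On a tie, tb a b = True means that a is kept (b discarded).\<close>
fun duel_losers :: "(nat \<Rightarrow> real) \<Rightarrow> nat \<Rightarrow> (nat \<Rightarrow> nat \<Rightarrow> bool) \<Rightarrow> nat list \<Rightarrow> nat set pmf" where
  "duel_losers mu L tb (a # b # rest) =
     binomial_pmf L (mu a) \<bind> (\<lambda>X. binomial_pmf L (mu b) \<bind> (\<lambda>Y.
     duel_losers mu L tb rest \<bind> (\<lambda>D.
     return_pmf (insert
       (if real X / real L < real Y / real L then a
        else if real Y / real L < real X / real L then b
        else if tb a b then b else a) D))))"
| "duel_losers mu L tb _ = return_pmf {}"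

definition phase1_regret :: "(nat \<Rightarrow> real) \<Rightarrow> nat \<Rightarrow> nat \<Rightarrow> nat \<Rightarrow> nat list \<Rightarrow> real" where
  "phase1_regret mu n L T s = sum_list (map (gap mu n) (take T (concat (map (\<lambda>a. replicate L a) s))))"

text \<open>Black-box UCB: N S h k is the expected number of pulls of arm k when UCB is run on the
  arm set S for h rounds.\<close>
definition ucb_blackbox :: "(nat \<Rightarrow> real) \<Rightarrow> nat \<Rightarrow> (nat set \<Rightarrow> nat \<Rightarrow> nat \<Rightarrow> real) \<Rightarrow> bool" where
  "ucb_blackbox mu n N \<longleftrightarrow>
     (\<forall>S h. S \<subseteq> {..<n} \<and> S \<noteq> {} \<longrightarrow>
        (\<forall>k\<in>S. 0 \<le> N S h k) \<and> (\<Sum>k\<in>S. N S h k) = real h \<and>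
        (\<forall>k\<in>S. Max (mu ` S) - mu k > 0 \<longrightarrow>
            N S h k \<le> 8 * ln (real h) / (Max (mu ` S) - mu k)\<^sup>2))"

definition alarge_regret ::
  "(nat \<Rightarrow> real) \<Rightarrow> nat \<Rightarrow> nat \<Rightarrow> real \<Rightarrow> (nat set \<Rightarrow> nat \<Rightarrow> nat \<Rightarrow> real) \<Rightarrow> (nat \<Rightarrow> nat \<Rightarrow> bool) \<Rightarrow> nat \<Rightarrow> real" where
  "alarge_regret mu n m \<alpha> N tb T =
     (let c = n - m; L = Lpulls \<alpha> T n in
      measure_pmf.expectation
        (pmf_of_set (selections m c) \<bind> (\<lambda>s. duel_losers mu L tb s \<bind> (\<lambda>D.
           return_pmf (phase1_regret mu n L T s +
             (\<Sum>k\<in>{..<n} - D. gap mu n k * N ({..<n} - D) (T - 2 * c * L) k)))))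
        (\<lambda>x. x))"

end

theory Submission
  imports Defs "HOL-Real_Asymp.Real_Asymp"
begin

(* The duels last 2(n - m)L rounds, each costing at most 1. The best arm is discarded only if
   it loses its own duel, which by Hoeffding's inequality has probability at most
   2 exp(-L d^2/2), d the smallest gap; if it survives, UCB on the surviving arms costs at most
   8 ln T sum_i 1/Delta_i, and otherwise at most T. As L grows like T^(1/(alpha+1)), for large T
   we have T exp(-L d^2/2) <= 1 and ln T <= L/n. Finally Delta_i <= 1 and alpha >= 1 give
   1/Delta_i <= Delta_i^(1-2 alpha) and 1 <= Delta_i^(1-2 alpha), so the sum S of the
   Delta_i^(1-2 alpha) is at least n/2 and each of the three costs is at most
   8 (n - m) L S / n. *)

lemma measure_bind_pmf_le:
  assumes "\<And>x. x \<in> set_pmf M \<Longrightarrow> measure_pmf.prob (N x) A \<le> e"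
  shows "measure_pmf.prob (M \<bind> N) A \<le> e"
proof -
  obtain x0 where "x0 \<in> set_pmf M" using set_pmf_not_empty by fast
  then have e_nonneg: "0 \<le> e" using assms measure_nonneg order_trans by blast
  have "emeasure (bind_pmf M N) A = (\<integral>\<^sup>+x. emeasure (N x) A \<partial>M)" by simp
  also have "\<dots> \<le> (\<integral>\<^sup>+x. ennreal e \<partial>M)"
    using assms by (intro nn_integral_mono_AE AE_pmfI)
      (simp add: measure_pmf.emeasure_eq_measure ennreal_leI)
  also have "\<dots> = ennreal e" by simp
  finally show ?thesis using e_nonneg by (simp add: measure_pmf.emeasure_eq_measure)
qed

lemma measure_pair_pmf_fst_or_snd_le:
  "measure_pmf.prob (pair_pmf M M') {z. fst z \<in> A \<or> snd z \<in> A'}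
     \<le> measure_pmf.prob M A + measure_pmf.prob M' A'"
proof -
  have "{z. fst z \<in> A \<or> snd z \<in> A'} = fst -` A \<union> snd -` A'" by auto
  then have "measure_pmf.prob (pair_pmf M M') {z. fst z \<in> A \<or> snd z \<in> A'}
      \<le> measure_pmf.prob (pair_pmf M M') (fst -` A)
        + measure_pmf.prob (pair_pmf M M') (snd -` A')"
    by (simp add: measure_Un_le)
  also have "measure_pmf.prob (pair_pmf M M') (fst -` A) = measure_pmf.prob M A"
    by (metis measure_map_pmf map_fst_pair_pmf)
  also have "measure_pmf.prob (pair_pmf M M') (snd -` A') = measure_pmf.prob M' A'"
    by (metis measure_map_pmf map_snd_pair_pmf)
  finally show ?thesis .
qed

lemma expectation_bind_le_indicator_bound:
  fixes V :: "'a \<Rightarrow> 'b \<Rightarrow> real"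
  assumes V_le: "\<And>s D. s \<in> set_pmf M \<Longrightarrow> D \<in> set_pmf (K s) \<Longrightarrow> V s D \<le> A + B * indicator E D"
    and prob_E: "\<And>s. s \<in> set_pmf M \<Longrightarrow> measure_pmf.prob (K s) E \<le> e"
    and "0 \<le> A" and "0 \<le> B"
  shows "measure_pmf.expectation (M \<bind> (\<lambda>s. K s \<bind> (\<lambda>D. return_pmf (V s D)))) (\<lambda>x. x)
    \<le> A + B * e"
proof -
  define W where "W = M \<bind> (\<lambda>s. map_pmf (Pair s) (K s))"
  have "M \<bind> (\<lambda>s. K s \<bind> (\<lambda>D. return_pmf (V s D))) = map_pmf (\<lambda>z. V (fst z) (snd z)) W"
    unfolding W_def by (simp add: map_pmf_def bind_assoc_pmf bind_return_pmf)
  then have "measure_pmf.expectation (M \<bind> (\<lambda>s. K s \<bind> (\<lambda>D. return_pmf (V s D)))) (\<lambda>x. x)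
      = measure_pmf.expectation W (\<lambda>z. V (fst z) (snd z))" by simp
  also have "\<dots> \<le> measure_pmf.expectation W (\<lambda>z. A + B * indicator (snd -` E) z)"
  proof (rule integral_mono_AE')
    show "integrable (measure_pmf W) (\<lambda>z. A + B * indicator (snd -` E) z)"
      by (intro measure_pmf.integrable_const_bound[where B = "\<bar>A\<bar> + \<bar>B\<bar>"])
        (auto simp: indicator_def)
    show "AE z in measure_pmf W. V (fst z) (snd z) \<le> A + B * indicator (snd -` E) z"
    proof (rule AE_pmfI)
      fix z assume "z \<in> set_pmf W"
      then show "V (fst z) (snd z) \<le> A + B * indicator (snd -` E) z"
        using V_le by (auto simp: W_def indicator_vimage)
    qed
    show "AE z in measure_pmf W. 0 \<le> A + B * indicator (snd -` E) z"
      using assms(3,4) by (intro AE_pmfI) (auto simp: indicator_def)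
  qed
  also have "\<dots> = A + B * measure_pmf.prob W (snd -` E)"
    by (subst Bochner_Integration.integral_add) (auto simp: measure_pmf.emeasure_eq_measure)
  also have "measure_pmf.prob W (snd -` E) \<le> e"
    unfolding W_def
  proof (rule measure_bind_pmf_le)
    fix s assume "s \<in> set_pmf M"
    then show "measure_pmf.prob (map_pmf (Pair s) (K s)) (snd -` E) \<le> e"
      using prob_E by (simp add: vimage_def)
  qed
  finally show ?thesis using assms(4) by (simp add: mult_left_mono)
qed

lemma prob_binomial_fst_le_snd:
  assumes p: "p \<in> {0..1}" and q: "q \<in> {0..1}" and d: "0 < d" "d \<le> p - q" and L: "0 < L"
  shows "measure_pmf.prob (pair_pmf (binomial_pmf L p) (binomial_pmf L q))
      {z. real (fst z) / real L \<le> real (snd z) / real L} \<le> 2 * exp (- (real L * d\<^sup>2 / 2))"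
proof -
  have exponent: "exp (real_of_int (- 2 * int L) * (d / 2)\<^sup>2) = exp (- (real L * d\<^sup>2 / 2))"
    by (simp add: power2_eq_square)
  have lower: "measure_pmf.prob (binomial_pmf L p) {x. real x / real L \<le> p - d / 2}
      \<le> exp (- (real L * d\<^sup>2 / 2))"
    unfolding exponent[symmetric]
    by (rule binomial_distribution.prob_le')
      (use p L d in \<open>simp_all add: binomial_distribution_def\<close>)
  have upper: "measure_pmf.prob (binomial_pmf L q) {x. q + d / 2 \<le> real x / real L}
      \<le> exp (- (real L * d\<^sup>2 / 2))"
    unfolding exponent[symmetric]
    by (rule binomial_distribution.prob_ge')
      (use q L d in \<open>simp_all add: binomial_distribution_def\<close>)
  have "measure_pmf.prob (pair_pmf (binomial_pmf L p) (binomial_pmf L q))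
      {z. real (fst z) / real L \<le> real (snd z) / real L}
    \<le> measure_pmf.prob (pair_pmf (binomial_pmf L p) (binomial_pmf L q))
      {z. fst z \<in> {x. real x / real L \<le> p - d / 2} \<or> snd z \<in> {x. q + d / 2 \<le> real x / real L}}"
    using d by (intro measure_pmf.finite_measure_mono) auto
  also have "\<dots> \<le> measure_pmf.prob (binomial_pmf L p) {x. real x / real L \<le> p - d / 2}
      + measure_pmf.prob (binomial_pmf L q) {x. q + d / 2 \<le> real x / real L}"
    by (rule measure_pair_pmf_fst_or_snd_le)
  also have "\<dots> \<le> 2 * exp (- (real L * d\<^sup>2 / 2))"
    using lower upper by simp
  finally show ?thesis .
qed

lemma prob_binomial_snd_le_fst:
  assumes "p \<in> {0..1}" and "q \<in> {0..1}" and "0 < d" and "d \<le> p - q" and "0 < L"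
  shows "measure_pmf.prob (pair_pmf (binomial_pmf L q) (binomial_pmf L p))
      {z. real (snd z) / real L \<le> real (fst z) / real L} \<le> 2 * exp (- (real L * d\<^sup>2 / 2))"
  using prob_binomial_fst_le_snd[OF assms]
  by (subst pair_commute_pmf) (simp add: case_prod_beta vimage_def)

definition duel_loser :: "nat \<Rightarrow> (nat \<Rightarrow> nat \<Rightarrow> bool) \<Rightarrow> nat \<Rightarrow> nat \<Rightarrow> nat \<Rightarrow> nat \<Rightarrow> nat" where
  "duel_loser L tb a b X Y =
     (if real X / real L < real Y / real L then a
      else if real Y / real L < real X / real L then b
      else if tb a b then b else a)"

lemma duel_loser_eq_first:
  "duel_loser L tb a b X Y = a \<Longrightarrow> a \<noteq> b \<Longrightarrow> real X / real L \<le> real Y / real L"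
  by (auto simp: duel_loser_def split: if_splits)

lemma duel_loser_eq_second:
  "duel_loser L tb a b X Y = b \<Longrightarrow> a \<noteq> b \<Longrightarrow> real Y / real L \<le> real X / real L"
  by (auto simp: duel_loser_def split: if_splits)

lemma duel_losers_Cons_Cons:
  "duel_losers mu L tb (a # b # rest) =
     map_pmf (\<lambda>((X, Y), D). insert (duel_loser L tb a b X Y) D)
       (pair_pmf (pair_pmf (binomial_pmf L (mu a)) (binomial_pmf L (mu b)))
         (duel_losers mu L tb rest))"
  by (simp add: duel_loser_def pair_pmf_def map_pmf_def bind_assoc_pmf bind_return_pmf)

lemma duel_losers_support:
  assumes "D \<in> set_pmf (duel_losers mu L tb xs)"
  shows "D \<subseteq> set xs" and "card D \<le> length xs div 2"
proof -
  have "D \<subseteq> set xs \<and> card D \<le> length xs div 2"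
    using assms
  proof (induction xs arbitrary: D rule: induct_list012)
    case (3 a b rest)
    then obtain X Y D' where D': "D' \<in> set_pmf (duel_losers mu L tb rest)"
      and D: "D = insert (duel_loser L tb a b X Y) D'"
      unfolding duel_losers_Cons_Cons by auto
    with "3.IH"(1) have "D' \<subseteq> set rest" "card D' \<le> length rest div 2" by auto
    moreover from this have "card D \<le> card D' + 1"
      unfolding D by (simp add: card_insert_if finite_subset)
    ultimately show ?case unfolding D by (auto simp: duel_loser_def)
  qed auto
  then show "D \<subseteq> set xs" and "card D \<le> length xs div 2" by auto
qed

lemma duel_losers_prob_discard:
  assumes "distinct xs" and "\<forall>j\<in>set xs. 0 \<le> mu j \<and> mu j \<le> 1" and "0 < L" and "0 < d"
    and "\<forall>j\<in>set xs. j \<noteq> a \<longrightarrow> d \<le> mu a - mu j"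
  shows "measure_pmf.prob (duel_losers mu L tb xs) {D. a \<in> D} \<le> 2 * exp (- (real L * d\<^sup>2 / 2))"
  using assms
proof (induction xs rule: induct_list012)
  case (3 x y rest)
  define duel where "duel = pair_pmf (binomial_pmf L (mu x)) (binomial_pmf L (mu y))"
  have "measure_pmf.prob (duel_losers mu L tb (x # y # rest)) {D. a \<in> D}
      = measure_pmf.prob (pair_pmf duel (duel_losers mu L tb rest))
          {z. fst z \<in> {(X, Y). duel_loser L tb x y X Y = a} \<or> snd z \<in> {D. a \<in> D}}"
    unfolding duel_losers_Cons_Cons duel_def measure_map_pmf
    by (intro arg_cong[where f = "measure_pmf.prob _"]) auto
  also have "\<dots> \<le> measure_pmf.prob duel {(X, Y). duel_loser L tb x y X Y = a}
      + measure_pmf.prob (duel_losers mu L tb rest) {D. a \<in> D}"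
    by (rule measure_pair_pmf_fst_or_snd_le)
  also have "\<dots> \<le> 2 * exp (- (real L * d\<^sup>2 / 2))"
  proof (cases "a = x \<or> a = y")
    case True
    then have "a \<notin> set rest" using "3.prems"(1) by auto
    then have "measure_pmf.prob (duel_losers mu L tb rest) {D. a \<in> D} = 0"
      using duel_losers_support(1)[of _ mu L tb rest] by (subst measure_pmf_zero_iff) blast
    moreover have "measure_pmf.prob duel {(X, Y). duel_loser L tb x y X Y = a}
        \<le> 2 * exp (- (real L * d\<^sup>2 / 2))"
    proof (cases "a = x")
      case True
      have "measure_pmf.prob duel {(X, Y). duel_loser L tb x y X Y = a}
          \<le> measure_pmf.prob duel {z. real (fst z) / real L \<le> real (snd z) / real L}"
        using True "3.prems"(1)
        by (intro measure_pmf.finite_measure_mono) (auto dest: duel_loser_eq_first)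
      also have "\<dots> \<le> 2 * exp (- (real L * d\<^sup>2 / 2))"
        unfolding duel_def using True "3.prems" by (intro prob_binomial_fst_le_snd) auto
      finally show ?thesis .
    next
      case False
      with \<open>a = x \<or> a = y\<close> have "a = y" by simp
      have "measure_pmf.prob duel {(X, Y). duel_loser L tb x y X Y = a}
          \<le> measure_pmf.prob duel {z. real (snd z) / real L \<le> real (fst z) / real L}"
        using \<open>a = y\<close> "3.prems"(1)
        by (intro measure_pmf.finite_measure_mono) (auto dest: duel_loser_eq_second)
      also have "\<dots> \<le> 2 * exp (- (real L * d\<^sup>2 / 2))"
        unfolding duel_def using \<open>a = y\<close> "3.prems" by (intro prob_binomial_snd_le_fst) auto
      finally show ?thesis .
    qed
    ultimately show ?thesis by simp
  next
    case False
    then have "{(X, Y). duel_loser L tb x y X Y = a} = {}" by (auto simp: duel_loser_def)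
    moreover have "measure_pmf.prob (duel_losers mu L tb rest) {D. a \<in> D}
        \<le> 2 * exp (- (real L * d\<^sup>2 / 2))"
      using "3.IH"(1) "3.prems" by simp
    ultimately show ?thesis by simp
  qed
  finally show ?case .
qed auto

lemma finite_selections: "finite (selections m c)"
proof (rule finite_subset)
  show "selections m c \<subseteq> {xs. set xs \<subseteq> {..<m} \<and> length xs = 2 * c}"
    unfolding selections_def by auto
qed (simp add: finite_lists_length_eq)

lemma selections_nonempty: "2 * c \<le> m \<Longrightarrow> selections m c \<noteq> {}"
  unfolding selections_def by (intro ex_in_conv[THEN iffD1] exI[of _ "[0..<2 * c]"]) auto

lemma phase1_regret_le:
  assumes "\<forall>a\<in>set s. gap mu n a \<le> 1"
  shows "phase1_regret mu n L T s \<le> real (length s * L)"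
proof -
  define pulls where "pulls = take T (concat (map (\<lambda>a. replicate L a) s))"
  have "set pulls \<subseteq> set s" unfolding pulls_def using set_take_subset by fastforce
  then have "phase1_regret mu n L T s \<le> (\<Sum>a\<leftarrow>pulls. 1)"
    unfolding phase1_regret_def pulls_def[symmetric] using assms by (intro sum_list_mono) auto
  also have "\<dots> \<le> real (length s * L)"
    unfolding pulls_def by (simp add: sum_list_triv length_concat o_def flip: of_nat_mult)
  finally show ?thesis .
qed

lemma dueling_regret_terms_le:
  fixes c n Lr L G S lnT T d :: real
  assumes "1 \<le> c" and "0 < n" and "1 \<le> Lr" and "Lr \<le> L" and "L \<le> Lr + 1"
    and "0 \<le> G" and "G \<le> S" and "n \<le> 2 * S" and "lnT \<le> Lr / n"
    and "0 \<le> T" and "T * exp (- (Lr * d\<^sup>2 / 2)) \<le> 1"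
  shows "2 * c * L + 8 * lnT * G + T * (2 * exp (- (L * d\<^sup>2 / 2))) \<le> 24 * (c * Lr / n * S)"
proof -
  have "1 / 2 \<le> S / n" using assms by (simp add: field_simps)
  have "1 \<le> c * Lr" using mult_mono[of 1 c 1 Lr] assms by simp
  then have unit: "1 \<le> 2 * (c * Lr * (S / n))"
    using mult_left_mono[OF \<open>1 / 2 \<le> S / n\<close>, of "c * Lr"] by linarith
  have "2 * c * L \<le> 2 * c * (Lr + 1)" using assms by (intro mult_left_mono) auto
  also have "\<dots> \<le> 4 * (c * Lr)" using assms mult_left_mono[of 1 Lr c] by (simp add: algebra_simps)
  also have "\<dots> \<le> 8 * (c * Lr * (S / n))"
    using mult_left_mono[OF \<open>1 / 2 \<le> S / n\<close>, of "c * Lr"] \<open>1 \<le> c * Lr\<close> by simp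
  finally have first: "2 * c * L \<le> 8 * (c * Lr * (S / n))" .
  have "lnT * G \<le> Lr / n * S"
    using assms by (meson mult_mono order_trans divide_nonneg_pos zero_le_one)
  also have "\<dots> \<le> c * (Lr * (S / n))"
    using assms \<open>1 / 2 \<le> S / n\<close> mult_right_mono[of 1 c "Lr * (S / n)"] by simp
  finally have second: "8 * lnT * G \<le> 8 * (c * Lr * (S / n))" by simp
  have "exp (- (L * d\<^sup>2 / 2)) \<le> exp (- (Lr * d\<^sup>2 / 2))"
    using assms by (simp add: mult_right_mono)
  then have "T * (2 * exp (- (L * d\<^sup>2 / 2))) \<le> 2 * (T * exp (- (Lr * d\<^sup>2 / 2)))"
    using assms by (simp add: mult_left_mono)
  also have "\<dots> \<le> 8 * (c * Lr * (S / n))" using assms(11) unit by linarith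
  finally have third: "T * (2 * exp (- (L * d\<^sup>2 / 2))) \<le> 8 * (c * Lr * (S / n))" .
  have "24 * (c * Lr / n * S) = 3 * (8 * (c * Lr * (S / n)))" by simp
  then show ?thesis using first second third by linarith
qed

lemma eventually_Lparam_large:
  assumes "0 < \<alpha>" and "0 < n" and "0 < d"
  shows "\<forall>\<^sub>F T in sequentially. 1 \<le> real T \<and> 1 \<le> Lparam \<alpha> T n
    \<and> ln (real T) \<le> Lparam \<alpha> T n / real n \<and> real T * exp (- (Lparam \<alpha> T n * d\<^sup>2 / 2)) \<le> 1"
proof -
  define K b where "K = (2 * \<alpha> / exp 1) powr (\<alpha> / (\<alpha> + 1))" and "b = 1 / (\<alpha> + 1)"
  have "0 < K" "0 < b" using \<open>0 < \<alpha>\<close> by (simp_all add: K_def b_def)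
  then have "\<forall>\<^sub>F x in at_top. 1 \<le> x \<and> 1 \<le> K * (x / real n) powr b
      \<and> ln x \<le> K * (x / real n) powr b / real n \<and> x * exp (- (K * (x / real n) powr b * d\<^sup>2 / 2)) \<le> 1"
    using assms by (intro eventually_conj; real_asymp)
  from eventually_compose_filterlim[OF this filterlim_real_sequentially]
  show ?thesis unfolding Lparam_def K_def b_def .
qed

lemma Lparam_div_eq:
  assumes "0 < n"
  shows "Lparam \<alpha> T n / real n = (2 * \<alpha> / exp 1) powr (\<alpha> / (\<alpha> + 1)) * real T powr (1 / (\<alpha> + 1))
    / real n powr (1 + 1 / (\<alpha> + 1))"
  using assms by (simp add: Lparam_def powr_divide powr_add)

locale bernoulli_instance =
  fixes mu :: "nat \<Rightarrow> real" and n best :: nat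
  assumes best_lt: "best < n"
    and best_strict: "\<And>j. j < n \<Longrightarrow> j \<noteq> best \<Longrightarrow> mu j < mu best"
    and mu_nonneg: "\<And>i. i < n \<Longrightarrow> 0 \<le> mu i"
    and mu_le_1: "\<And>i. i < n \<Longrightarrow> mu i \<le> 1"
begin

abbreviation suboptimal :: "nat set" where
  "suboptimal \<equiv> {..<n} - {best}"

abbreviation inverse_gap_sum :: real where
  "inverse_gap_sum \<equiv> \<Sum>i\<in>suboptimal. 1 / gap mu n i"

lemma Max_mu: "Max (mu ` {..<n}) = mu best"
  using best_lt best_strict by (intro Max_eqI) (auto intro: less_imp_le)

lemma gap_eq: "gap mu n i = mu best - mu i"
  unfolding gap_def Max_mu ..

lemma gap_nonneg: "i < n \<Longrightarrow> 0 \<le> gap mu n i"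
  using best_strict[of i] unfolding gap_eq by (cases "i = best") auto

lemma gap_le_1: "i < n \<Longrightarrow> gap mu n i \<le> 1"
  using mu_nonneg[of i] mu_le_1[OF best_lt] unfolding gap_eq by simp

lemma gap_pos_set_eq: "{i. i < n \<and> 0 < gap mu n i} = suboptimal"
  using best_strict unfolding gap_eq by fastforce

lemma inverse_gap_sum_nonneg: "0 \<le> inverse_gap_sum"
  using gap_nonneg by (intro sum_nonneg) auto

definition min_gap :: real where
  "min_gap = Min (gap mu n ` suboptimal)"

lemma min_gap_pos: "2 \<le> n \<Longrightarrow> 0 < min_gap"
proof -
  assume "2 \<le> n"
  then have "card suboptimal \<noteq> 0" using best_lt by simp
  then have "suboptimal \<noteq> {}" by (metis card.empty)
  then show ?thesis
    unfolding min_gap_def using gap_pos_set_eq by (subst Min_gr_iff) auto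
qed

lemma min_gap_le: "j < n \<Longrightarrow> j \<noteq> best \<Longrightarrow> min_gap \<le> mu best - mu j"
  unfolding min_gap_def gap_eq[symmetric] by (intro Min_le) auto

lemma gap_powr_bounds:
  assumes "1 \<le> \<alpha>" and "i \<in> suboptimal"
  shows "1 / gap mu n i \<le> gap mu n i powr (1 - 2 * \<alpha>)" and "1 \<le> gap mu n i powr (1 - 2 * \<alpha>)"
proof -
  have g: "0 < gap mu n i" "gap mu n i \<le> 1"
    using assms(2) gap_pos_set_eq gap_le_1 by auto
  then have "gap mu n i powr 0 \<le> gap mu n i powr (1 - 2 * \<alpha>)"
    and "gap mu n i powr (-1) \<le> gap mu n i powr (1 - 2 * \<alpha>)"
    using assms(1) by (intro powr_mono'; simp)+
  then show "1 / gap mu n i \<le> gap mu n i powr (1 - 2 * \<alpha>)"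
    and "1 \<le> gap mu n i powr (1 - 2 * \<alpha>)"
    using g by (simp_all add: powr_minus_divide)
qed

lemma ucb_regret_le_rounds:
  assumes "ucb_blackbox mu n N" and "S \<subseteq> {..<n}" and "S \<noteq> {}"
  shows "(\<Sum>k\<in>S. gap mu n k * N S h k) \<le> real h"
proof -
  have N_nonneg: "\<forall>k\<in>S. 0 \<le> N S h k" and N_sum: "(\<Sum>k\<in>S. N S h k) = real h"
    using assms unfolding ucb_blackbox_def by blast+
  have "(\<Sum>k\<in>S. gap mu n k * N S h k) \<le> (\<Sum>k\<in>S. N S h k)"
    using N_nonneg assms(2) gap_le_1 gap_nonneg by (intro sum_mono mult_left_le_one_le) auto
  then show ?thesis using N_sum by simp
qed

lemma ucb_regret_le_log:
  assumes "ucb_blackbox mu n N" and "S \<subseteq> {..<n}" and "best \<in> S"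
  shows "(\<Sum>k\<in>S. gap mu n k * N S h k) \<le> 8 * ln (real h) * inverse_gap_sum"
proof -
  have "S \<noteq> {}" and "finite S" using assms(2,3) finite_subset by auto
  then have N_le: "\<forall>k\<in>S. 0 < Max (mu ` S) - mu k
      \<longrightarrow> N S h k \<le> 8 * ln (real h) / (Max (mu ` S) - mu k)\<^sup>2"
    using assms unfolding ucb_blackbox_def by blast
  have "Max (mu ` S) = mu best"
    using assms \<open>finite S\<close> gap_nonneg unfolding gap_eq by (intro Max_eqI) fastforce+
  then have N_le_gap: "N S h k \<le> 8 * ln (real h) / (gap mu n k)\<^sup>2" if "k \<in> S - {best}" for k
    using N_le that assms(2) gap_pos_set_eq unfolding gap_eq by fastforce
  \<comment> \<open>including h = 0, since ln 0 = 0\<close>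
  have ln_h: "0 \<le> ln (real h)" by (cases "h = 0") auto
  have "(\<Sum>k\<in>S. gap mu n k * N S h k) = (\<Sum>k\<in>S - {best}. gap mu n k * N S h k)"
    using assms(3) \<open>finite S\<close> by (simp add: sum.remove gap_eq)
  also have "\<dots> \<le> (\<Sum>k\<in>S - {best}. 8 * ln (real h) / gap mu n k)"
  proof (rule sum_mono)
    fix k assume k: "k \<in> S - {best}"
    then have gap_pos: "0 < gap mu n k" using assms(2) gap_pos_set_eq by blast
    then have "gap mu n k * N S h k \<le> gap mu n k * (8 * ln (real h) / (gap mu n k)\<^sup>2)"
      using N_le_gap[OF k] by (intro mult_left_mono) auto
    then show "gap mu n k * N S h k \<le> 8 * ln (real h) / gap mu n k"
      using gap_pos by (simp add: power2_eq_square)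
  qed
  also have "\<dots> \<le> (\<Sum>k\<in>suboptimal. 8 * ln (real h) / gap mu n k)"
    using assms(2) ln_h gap_nonneg by (intro sum_mono2) auto
  finally show ?thesis by (simp add: sum_distrib_left)
qed

lemma regret_after_duels_le:
  assumes ucb: "ucb_blackbox mu n N" and "m < n" and "1 \<le> T"
    and s: "s \<in> selections m (n - m)" and D: "D \<in> set_pmf (duel_losers mu L tb s)"
  shows "phase1_regret mu n L T s
      + (\<Sum>k\<in>{..<n} - D. gap mu n k * N ({..<n} - D) (T - 2 * (n - m) * L) k)
    \<le> 2 * real (n - m) * real L + 8 * ln (real T) * inverse_gap_sum
      + real T * indicator {D. best \<in> D} D"
proof -
  define S where "S = {..<n} - D"
  define h where "h = T - 2 * (n - m) * L"
  have s_arms: "set s \<subseteq> {..<n}" "length s = 2 * (n - m)"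
    using s \<open>m < n\<close> unfolding selections_def by auto
  have "length s \<le> m"
    using s card_mono[of "{..<m}" "set s"] distinct_card[of s] unfolding selections_def by auto
  have "D \<subseteq> set s" "card D \<le> n - m"
    using duel_losers_support[OF D] s_arms by auto
  then have "finite D" using finite_subset by blast
  then have "card {..<n} - card D \<le> card S"
    unfolding S_def by (rule diff_card_le_card_Diff)
  then have "S \<noteq> {}"
    using \<open>card D \<le> n - m\<close> \<open>length s \<le> m\<close> s_arms(2) \<open>m < n\<close> by auto
  have "phase1_regret mu n L T s \<le> 2 * real (n - m) * real L"
    using phase1_regret_le[of s mu n L T] s_arms gap_le_1 by auto
  moreover have "(\<Sum>k\<in>S. gap mu n k * N S h k)
      \<le> 8 * ln (real T) * inverse_gap_sum + real T * indicator {D. best \<in> D} D"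
  proof (cases "best \<in> D")
    case True
    have "0 \<le> 8 * ln (real T) * inverse_gap_sum"
      using \<open>1 \<le> T\<close> inverse_gap_sum_nonneg by simp
    moreover have "(\<Sum>k\<in>S. gap mu n k * N S h k) \<le> real h"
      using ucb \<open>S \<noteq> {}\<close> unfolding S_def by (intro ucb_regret_le_rounds) auto
    moreover have "real h \<le> real T" unfolding h_def by simp
    ultimately show ?thesis using True by (simp add: algebra_simps)
  next
    case False
    have "ln (real h) \<le> ln (real T)"
      using \<open>1 \<le> T\<close> by (cases "h = 0") (auto simp: h_def simp del: of_nat_diff)
    moreover have "(\<Sum>k\<in>S. gap mu n k * N S h k) \<le> 8 * ln (real h) * inverse_gap_sum"
      unfolding S_def using ucb False best_lt by (intro ucb_regret_le_log) auto
    ultimately show ?thesis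
      using False inverse_gap_sum_nonneg by (simp add: mult_right_mono order_trans)
  qed
  ultimately show ?thesis unfolding S_def h_def by linarith
qed

lemma alarge_regret_le:
  assumes ucb: "ucb_blackbox mu n N" and "m < n" and "2 * (n - m) \<le> m" and "2 \<le> n"
    and "1 \<le> T" and L_pos: "0 < Lpulls \<alpha> T n"
  shows "alarge_regret mu n m \<alpha> N tb T
    \<le> 2 * real (n - m) * real (Lpulls \<alpha> T n) + 8 * ln (real T) * inverse_gap_sum
      + real T * (2 * exp (- (real (Lpulls \<alpha> T n) * min_gap\<^sup>2 / 2)))"
  unfolding alarge_regret_def Let_def
proof (rule expectation_bind_le_indicator_bound[where E = "{D. best \<in> D}"])
  have set_selections: "set_pmf (pmf_of_set (selections m (n - m))) = selections m (n - m)"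
    using finite_selections selections_nonempty \<open>2 * (n - m) \<le> m\<close>
    by (intro set_pmf_of_set) auto
  show "measure_pmf.prob (duel_losers mu (Lpulls \<alpha> T n) tb s) {D. best \<in> D}
      \<le> 2 * exp (- (real (Lpulls \<alpha> T n) * min_gap\<^sup>2 / 2))"
    if "s \<in> set_pmf (pmf_of_set (selections m (n - m)))" for s
  proof (rule duel_losers_prob_discard)
    have "s \<in> selections m (n - m)" using that set_selections by simp
    then have "set s \<subseteq> {..<n}" "distinct s"
      using \<open>m < n\<close> unfolding selections_def by auto
    then show "distinct s" "\<forall>j\<in>set s. 0 \<le> mu j \<and> mu j \<le> 1"
      and "\<forall>j\<in>set s. j \<noteq> best \<longrightarrow> min_gap \<le> mu best - mu j"
      using mu_nonneg mu_le_1 min_gap_le by auto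
  qed (use L_pos min_gap_pos \<open>2 \<le> n\<close> in auto)
  show "phase1_regret mu n (Lpulls \<alpha> T n) T s
      + (\<Sum>k\<in>{..<n} - D. gap mu n k * N ({..<n} - D) (T - 2 * (n - m) * Lpulls \<alpha> T n) k)
    \<le> 2 * real (n - m) * real (Lpulls \<alpha> T n) + 8 * ln (real T) * inverse_gap_sum
      + real T * indicator {D. best \<in> D} D"
    if "s \<in> set_pmf (pmf_of_set (selections m (n - m)))"
      and "D \<in> set_pmf (duel_losers mu (Lpulls \<alpha> T n) tb s)" for s D
    using that assms unfolding set_selections by (intro regret_after_duels_le) auto
  show "0 \<le> 2 * real (n - m) * real (Lpulls \<alpha> T n) + 8 * ln (real T) * inverse_gap_sum"
    using \<open>1 \<le> T\<close> inverse_gap_sum_nonneg by simp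
qed simp

lemma alarge_regret_le_Lparam:
  assumes ucb: "ucb_blackbox mu n N" and "1 \<le> \<alpha>" and "m < n" and "2 * (n - m) \<le> m"
    and T: "1 \<le> real T" "1 \<le> Lparam \<alpha> T n" "ln (real T) \<le> Lparam \<alpha> T n / real n"
      "real T * exp (- (Lparam \<alpha> T n * min_gap\<^sup>2 / 2)) \<le> 1"
  shows "alarge_regret mu n m \<alpha> N tb T
    \<le> 24 * (real (n - m) * Lparam \<alpha> T n / real n * (\<Sum>i\<in>suboptimal. gap mu n i powr (1 - 2 * \<alpha>)))"
proof -
  have "2 \<le> n" using assms(3,4) by linarith
  have L: "Lparam \<alpha> T n \<le> real (Lpulls \<alpha> T n)" "real (Lpulls \<alpha> T n) \<le> Lparam \<alpha> T n + 1"
    unfolding Lpulls_def using T(2) by linarith+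
  have "real (n - 1) = (\<Sum>i\<in>suboptimal. 1)" using best_lt by simp
  also have "\<dots> \<le> (\<Sum>i\<in>suboptimal. gap mu n i powr (1 - 2 * \<alpha>))"
    using gap_powr_bounds(2) \<open>1 \<le> \<alpha>\<close> by (intro sum_mono) auto
  finally have "real n \<le> 2 * (\<Sum>i\<in>suboptimal. gap mu n i powr (1 - 2 * \<alpha>))"
    using \<open>2 \<le> n\<close> by linarith
  moreover have "inverse_gap_sum \<le> (\<Sum>i\<in>suboptimal. gap mu n i powr (1 - 2 * \<alpha>))"
    using gap_powr_bounds(1) \<open>1 \<le> \<alpha>\<close> by (intro sum_mono) auto
  moreover have "alarge_regret mu n m \<alpha> N tb T
    \<le> 2 * real (n - m) * real (Lpulls \<alpha> T n) + 8 * ln (real T) * inverse_gap_sum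
      + real T * (2 * exp (- (real (Lpulls \<alpha> T n) * min_gap\<^sup>2 / 2)))"
    using assms \<open>2 \<le> n\<close> L by (intro alarge_regret_le) auto
  ultimately show ?thesis
    using assms(3) T L inverse_gap_sum_nonneg
    by (intro order_trans[OF _ dueling_regret_terms_le]) auto
qed

lemma eventually_alarge_regret_le:
  assumes ucb: "ucb_blackbox mu n N" and "1 \<le> \<alpha>" and "2 * real n \<le> 3 * real m" and "m < n"
  shows "\<exists>T0. \<forall>T\<ge>T0. alarge_regret mu n m \<alpha> N tb T \<le>
    24 * ((2 * \<alpha> / exp 1) powr (\<alpha> / (\<alpha> + 1)) * real (n - m) * real T powr (1 / (\<alpha> + 1))
      / real n powr (1 + 1 / (\<alpha> + 1))
      * (\<Sum>i\<in>{i. i < n \<and> gap mu n i > 0}. gap mu n i powr (1 - 2 * \<alpha>)))"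
proof -
  have "2 * (n - m) \<le> m" and "2 \<le> n" using assms(3,4) by linarith+
  then obtain T0 where T0: "\<And>T. T \<ge> T0 \<Longrightarrow> 1 \<le> real T \<and> 1 \<le> Lparam \<alpha> T n
      \<and> ln (real T) \<le> Lparam \<alpha> T n / real n \<and> real T * exp (- (Lparam \<alpha> T n * min_gap\<^sup>2 / 2)) \<le> 1"
    using eventually_Lparam_large[of \<alpha> n min_gap] min_gap_pos \<open>1 \<le> \<alpha>\<close>
    unfolding eventually_sequentially by auto
  have "alarge_regret mu n m \<alpha> N tb T
    \<le> 24 * (real (n - m) * (Lparam \<alpha> T n / real n) * (\<Sum>i\<in>suboptimal. gap mu n i powr (1 - 2 * \<alpha>)))"
    if "T \<ge> T0" for T
    using alarge_regret_le_Lparam[OF ucb \<open>1 \<le> \<alpha>\<close> \<open>m < n\<close> \<open>2 * (n - m) \<le> m\<close>] T0[OF that]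
    by simp
  moreover have "24 * (real (n - m) * (Lparam \<alpha> T n / real n)
        * (\<Sum>i\<in>suboptimal. gap mu n i powr (1 - 2 * \<alpha>)))
      = 24 * ((2 * \<alpha> / exp 1) powr (\<alpha> / (\<alpha> + 1)) * real (n - m) * real T powr (1 / (\<alpha> + 1))
        / real n powr (1 + 1 / (\<alpha> + 1))
        * (\<Sum>i\<in>{i. i < n \<and> gap mu n i > 0}. gap mu n i powr (1 - 2 * \<alpha>)))" for T
    using \<open>2 \<le> n\<close> by (subst Lparam_div_eq) (auto simp: gap_pos_set_eq mult_ac)
  ultimately show ?thesis by metis
qed

end

theorem theorem3p1:
  shows "\<exists>C>0. \<forall>(\<alpha>::real) (n::nat) (m::nat) (mu::nat \<Rightarrow> real)
            (N::nat set \<Rightarrow> nat \<Rightarrow> nat \<Rightarrow> real) (tb::nat \<Rightarrow> nat \<Rightarrow> bool).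
     1 \<le> \<alpha> \<and> 2 * real n \<le> 3 * real m \<and> m < n \<and>
     (\<forall>i<n. 0 \<le> mu i \<and> mu i \<le> 1) \<and>
     (\<exists>!i. i < n \<and> (\<forall>j<n. mu j \<le> mu i)) \<and>
     ucb_blackbox mu n N
     \<longrightarrow> (\<exists>T0. \<forall>T\<ge>T0.
           alarge_regret mu n m \<alpha> N tb T \<le>
             C * ((2 * \<alpha> / exp 1) powr (\<alpha> / (\<alpha> + 1)) * real (n - m) * real T powr (1 / (\<alpha> + 1))
                  / real n powr (1 + 1 / (\<alpha> + 1))
                  * (\<Sum>i\<in>{i. i < n \<and> gap mu n i > 0}. gap mu n i powr (1 - 2 * \<alpha>))))"
proof (rule exI[of _ 24], intro conjI allI impI)
  fix \<alpha> :: real and n m :: nat and mu :: "nat \<Rightarrow> real" and N :: "nat set \<Rightarrow> nat \<Rightarrow> nat \<Rightarrow> real"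
    and tb :: "nat \<Rightarrow> nat \<Rightarrow> bool"
  assume H: "1 \<le> \<alpha> \<and> 2 * real n \<le> 3 * real m \<and> m < n \<and> (\<forall>i<n. 0 \<le> mu i \<and> mu i \<le> 1) \<and>
     (\<exists>!i. i < n \<and> (\<forall>j<n. mu j \<le> mu i)) \<and> ucb_blackbox mu n N"
  then obtain best where best: "best < n" "\<forall>j<n. mu j \<le> mu best"
    and unique: "\<And>i. i < n \<Longrightarrow> \<forall>j<n. mu j \<le> mu i \<Longrightarrow> i = best"
    by blast
  have "mu j < mu best" if "j < n" and "j \<noteq> best" for j
    using best unique[OF that(1)] that by force
  with best H interpret bernoulli_instance mu n best
    by unfold_locales auto
  show "\<exists>T0. \<forall>T\<ge>T0. alarge_regret mu n m \<alpha> N tb T \<le>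
    24 * ((2 * \<alpha> / exp 1) powr (\<alpha> / (\<alpha> + 1)) * real (n - m) * real T powr (1 / (\<alpha> + 1))
      / real n powr (1 + 1 / (\<alpha> + 1))
      * (\<Sum>i\<in>{i. i < n \<and> gap mu n i > 0}. gap mu n i powr (1 - 2 * \<alpha>)))"
    using H by (intro eventually_alarge_regret_le) auto
qed simp

end
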